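(* Let $Z$ be a random vector in $\mathbb{R}^d$ with a probability density $\mu_Z$ such that $\|Z\|$ is $\sqrt d\sigma_Z$-sub-Gaussian. Let $\overline{\alpha}=\inf\{\alpha:\mathbb{P}[\|Z\|\le\alpha]=1\}\in(0,\infty]$. For $\alpha\in(0,\overline\alpha)$ let $V\sim\mathrm{Uniform}[0,\alpha]$ be independent of $Z$ and define $U_\alpha=Z$ if $\|Z\|\le\alpha$ and $U_\alpha=\frac{Z}{\|Z\|}V$ otherwise, with distribution $\mu_{U_\alpha}$. Then \[ W_2(\mu_Z,\mu_{U_\alpha})\le\sqrt2\,(\alpha+\sqrt d\sigma_Z)\,e^{-\alpha^2/(2d\sigma_Z^2)}. \]
   Context: $W_2(\mu,\nu)=\inf\mathbb{E}^{1/2}\|U-V\|^2$ over couplings of $U\sim\mu$, $V\sim\nu$ is the second-order Wasserstein distance. A real random variable $A$ is $\sigma$-sub-Gaussian if $\inf\{t>0:\mathbb{E}\exp(A^2/t^2)\le2\}=\sigma<\infty$. *)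

theory Defs
  imports "HOL-Probability.Probability"
begin

text \<open>Sub-Gaussian (Orlicz psi_2) norm: inf of t > 0 with E exp(A^2/t^2) \<le> 2.\<close>
definition subgauss_set :: "'a measure \<Rightarrow> ('a \<Rightarrow> real) \<Rightarrow> real set" where
  "subgauss_set M A = {t. t > 0 \<and> (\<integral>\<^sup>+ x. ennreal (exp ((A x)\<^sup>2 / t\<^sup>2)) \<partial>M) \<le> 2}"

definition sub_gaussian :: "'a measure \<Rightarrow> ('a \<Rightarrow> real) \<Rightarrow> real \<Rightarrow> bool" where
  "sub_gaussian M A \<sigma> \<longleftrightarrow> subgauss_set M A \<noteq> {} \<and> Inf (subgauss_set M A) = \<sigma>"

definition couplings :: "'b measure \<Rightarrow> 'b measure \<Rightarrow> ('b \<times> 'b) measure set" where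
  "couplings \<mu> \<nu> = {\<pi>. prob_space \<pi> \<and> sets \<pi> = sets (\<mu> \<Otimes>\<^sub>M \<nu>)
      \<and> distr \<pi> \<mu> fst = \<mu> \<and> distr \<pi> \<nu> snd = \<nu>}"

definition W2_sq :: "('b::real_normed_vector) measure \<Rightarrow> 'b measure \<Rightarrow> ennreal" where
  "W2_sq \<mu> \<nu> = (INF \<pi>\<in>couplings \<mu> \<nu>. \<integral>\<^sup>+ p. ennreal ((norm (fst p - snd p))\<^sup>2) \<partial>\<pi>)"

definition W2 :: "('b::real_normed_vector) measure \<Rightarrow> 'b measure \<Rightarrow> ereal" where
  "W2 \<mu> \<nu> = (if W2_sq \<mu> \<nu> = \<top> then \<infinity> else ereal (sqrt (enn2real (W2_sq \<mu> \<nu>))))"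

definition alpha_bar :: "'a measure \<Rightarrow> ('a \<Rightarrow> 'b::real_normed_vector) \<Rightarrow> ereal" where
  "alpha_bar M Z = Inf {ereal a | a. measure M {x \<in> space M. norm (Z x) \<le> a} = 1}"

end

theory Submission
  imports Defs "HOL-Real_Asymp.Real_Asymp"
begin

text \<open>
  Couple Z with U itself. The two differ only when \<open>\<parallel>Z\<parallel> > \<alpha>\<close>, and then
  \<open>\<parallel>Z - U\<parallel> = \<parallel>Z\<parallel> - V \<le> \<parallel>Z\<parallel>\<close>. For every admissible sub-Gaussian scale t the elementary
  inequality \<open>x\<^sup>2 \<le> (\<alpha> + t)\<^sup>2 exp ((x\<^sup>2 - \<alpha>\<^sup>2) / t\<^sup>2)\<close> for \<open>x \<ge> \<alpha>\<close> together with
  \<open>E exp (\<parallel>Z\<parallel>\<^sup>2 / t\<^sup>2) \<le> 2\<close> bounds the transport cost by \<open>2 (\<alpha> + t)\<^sup>2 exp (- \<alpha>\<^sup>2 / t\<^sup>2)\<close>;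
  letting t decrease to the sub-Gaussian norm gives the claim.
\<close>

lemma sq_le_exp_sq_diff:
  fixes a x t :: real
  assumes "0 \<le> a" "a \<le> x" "0 < t"
  shows "x\<^sup>2 \<le> (a + t)\<^sup>2 * exp ((x\<^sup>2 - a\<^sup>2) / t\<^sup>2)"
proof -
  define y where "y = x\<^sup>2 - a\<^sup>2"
  have "0 \<le> y" "t\<^sup>2 \<le> (a + t)\<^sup>2" "a\<^sup>2 \<le> (a + t)\<^sup>2"
    using assms by (auto simp: y_def intro: power_mono)
  have "t\<^sup>2 * x\<^sup>2 = t\<^sup>2 * a\<^sup>2 + t\<^sup>2 * y" by (simp add: y_def algebra_simps)
  also have "\<dots> \<le> t\<^sup>2 * (a + t)\<^sup>2 + (a + t)\<^sup>2 * y"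
    using \<open>0 \<le> y\<close> \<open>t\<^sup>2 \<le> (a + t)\<^sup>2\<close> \<open>a\<^sup>2 \<le> (a + t)\<^sup>2\<close>
    by (intro add_mono mult_left_mono mult_right_mono) auto
  also have "\<dots> = t\<^sup>2 * ((a + t)\<^sup>2 * (1 + y / t\<^sup>2))"
    using assms(3) by (simp add: field_simps)
  finally have "x\<^sup>2 \<le> (a + t)\<^sup>2 * (1 + y / t\<^sup>2)"
    using assms(3) by simp
  also have "\<dots> \<le> (a + t)\<^sup>2 * exp (y / t\<^sup>2)"
    by (intro mult_left_mono exp_ge_add_one_self) simp
  finally show ?thesis by (simp add: y_def)
qed

lemma norm_sub_radial_resample_sq_le:
  fixes z :: "'b::real_normed_vector"
  assumes "0 \<le> v" "v \<le> \<alpha>" "0 < t"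
  shows "(norm (z - (if norm z \<le> \<alpha> then z else (v / norm z) *\<^sub>R z)))\<^sup>2
           \<le> (\<alpha> + t)\<^sup>2 * exp (- (\<alpha>\<^sup>2) / t\<^sup>2) * exp ((norm z)\<^sup>2 / t\<^sup>2)"
proof (cases "norm z \<le> \<alpha>")
  case True
  then show ?thesis by simp
next
  case False
  let ?n = "norm z"
  have "?n > 0" using False assms by linarith
  have "norm (z - (v / ?n) *\<^sub>R z) = norm ((1 - v / ?n) *\<^sub>R z)"
    by (simp add: scaleR_diff_left)
  also have "\<dots> = \<bar>(1 - v / ?n) * ?n\<bar>" by (simp add: abs_mult)
  also have "(1 - v / ?n) * ?n = ?n - v" using \<open>?n > 0\<close> by (simp add: left_diff_distrib)
  also have "\<bar>?n - v\<bar> \<le> ?n" using False assms by auto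
  finally have "(norm (z - (v / ?n) *\<^sub>R z))\<^sup>2 \<le> ?n\<^sup>2" by (rule power_mono) simp
  also have "\<dots> \<le> (\<alpha> + t)\<^sup>2 * exp ((?n\<^sup>2 - \<alpha>\<^sup>2) / t\<^sup>2)"
    using False assms by (intro sq_le_exp_sq_diff) auto
  also have "exp ((?n\<^sup>2 - \<alpha>\<^sup>2) / t\<^sup>2) = exp (- (\<alpha>\<^sup>2) / t\<^sup>2) * exp (?n\<^sup>2 / t\<^sup>2)"
    by (simp add: exp_add[symmetric] diff_divide_distrib)
  finally show ?thesis using False by (simp add: mult.assoc)
qed

lemma subgauss_set_pos: "t \<in> subgauss_set M A \<Longrightarrow> 0 < t"
  by (simp add: subgauss_set_def)

lemma subgauss_set_mono:
  assumes t: "t \<in> subgauss_set M A" and "t \<le> t'"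
  shows "t' \<in> subgauss_set M A"
proof -
  have "0 < t" using subgauss_set_pos[OF t] .
  moreover have "t\<^sup>2 \<le> t'\<^sup>2" using \<open>0 < t\<close> \<open>t \<le> t'\<close> by (intro power_mono) auto
  ultimately have "(A x)\<^sup>2 / t'\<^sup>2 \<le> (A x)\<^sup>2 / t\<^sup>2" for x
    using \<open>t \<le> t'\<close> by (intro divide_left_mono) auto
  then have "(\<integral>\<^sup>+ x. ennreal (exp ((A x)\<^sup>2 / t'\<^sup>2)) \<partial>M) \<le> (\<integral>\<^sup>+ x. ennreal (exp ((A x)\<^sup>2 / t\<^sup>2)) \<partial>M)"
    by (intro nn_integral_mono ennreal_leI) simp
  also have "\<dots> \<le> 2" using t by (simp add: subgauss_set_def)
  finally show ?thesis using \<open>0 < t\<close> \<open>t \<le> t'\<close> by (simp add: subgauss_set_def)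
qed

lemma sub_gaussian_nonneg:
  assumes "sub_gaussian M A \<sigma>"
  shows "0 \<le> \<sigma>"
proof -
  have "0 \<le> Inf (subgauss_set M A)"
    using assms unfolding sub_gaussian_def
    by (intro cInf_greatest) (auto dest: subgauss_set_pos intro: less_imp_le)
  then show ?thesis using assms by (simp add: sub_gaussian_def)
qed

lemma sub_gaussian_mem_subgauss_set:
  assumes "sub_gaussian M A \<sigma>" "\<sigma> < t"
  shows "t \<in> subgauss_set M A"
proof -
  obtain t' where "t' \<in> subgauss_set M A" "t' < t"
    using assms cInf_lessD[of "subgauss_set M A" t] by (auto simp: sub_gaussian_def)
  then show ?thesis by (auto intro: subgauss_set_mono)
qed

lemma nn_integral_le_subgauss_set:
  assumes t: "t \<in> subgauss_set M A" and [measurable]: "A \<in> borel_measurable M"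
    and "0 \<le> K" and g: "AE x in M. g x \<le> K * exp ((A x)\<^sup>2 / t\<^sup>2)"
  shows "(\<integral>\<^sup>+ x. ennreal (g x) \<partial>M) \<le> ennreal (2 * K)"
proof -
  have "(\<integral>\<^sup>+ x. ennreal (g x) \<partial>M) \<le> (\<integral>\<^sup>+ x. ennreal K * ennreal (exp ((A x)\<^sup>2 / t\<^sup>2)) \<partial>M)"
    using g by (intro nn_integral_mono_AE) (auto simp: ennreal_mult[symmetric] \<open>0 \<le> K\<close>)
  also have "\<dots> = ennreal K * (\<integral>\<^sup>+ x. ennreal (exp ((A x)\<^sup>2 / t\<^sup>2)) \<partial>M)"
    by (rule nn_integral_cmult) measurable
  also have "\<dots> \<le> ennreal K * 2"
    using t by (intro mult_left_mono) (auto simp: subgauss_set_def)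
  finally show ?thesis using \<open>0 \<le> K\<close> by (simp add: ennreal_mult mult.commute)
qed

lemma distr_pair_in_couplings:
  assumes "prob_space M" and [measurable]: "X \<in> measurable M N" "Y \<in> measurable M N"
  shows "distr M (N \<Otimes>\<^sub>M N) (\<lambda>x. (X x, Y x)) \<in> couplings (distr M N X) (distr M N Y)"
  unfolding couplings_def
proof (intro CollectI conjI)
  interpret prob_space M by fact
  let ?\<pi> = "distr M (N \<Otimes>\<^sub>M N) (\<lambda>x. (X x, Y x))"
  show "prob_space ?\<pi>" by (rule prob_space_distr) simp
  show "sets ?\<pi> = sets (distr M N X \<Otimes>\<^sub>M distr M N Y)"
    by (simp add: sets_pair_measure_cong[OF sets_distr sets_distr])
  have "distr ?\<pi> (distr M N X) fst = distr M (distr M N X) (fst \<circ> (\<lambda>x. (X x, Y x)))"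
    by (rule distr_distr) (simp_all add: measurable_cong_sets[OF refl sets_distr])
  also have "\<dots> = distr M N X" by (rule distr_cong) auto
  finally show "distr ?\<pi> (distr M N X) fst = distr M N X" .
  have "distr ?\<pi> (distr M N Y) snd = distr M (distr M N Y) (snd \<circ> (\<lambda>x. (X x, Y x)))"
    by (rule distr_distr) (simp_all add: measurable_cong_sets[OF refl sets_distr])
  also have "\<dots> = distr M N Y" by (rule distr_cong) auto
  finally show "distr ?\<pi> (distr M N Y) snd = distr M N Y" .
qed

lemma W2_sq_le_nn_integral:
  fixes X Y :: "'a \<Rightarrow> 'b::{real_normed_vector, second_countable_topology}"
  assumes "prob_space M" and [measurable]: "X \<in> borel_measurable M" "Y \<in> borel_measurable M"
  shows "W2_sq (distr M borel X) (distr M borel Y) \<le> (\<integral>\<^sup>+ x. ennreal ((norm (X x - Y x))\<^sup>2) \<partial>M)"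
proof -
  let ?\<pi> = "distr M (borel \<Otimes>\<^sub>M borel) (\<lambda>x. (X x, Y x))"
  have "W2_sq (distr M borel X) (distr M borel Y) \<le> (\<integral>\<^sup>+ p. ennreal ((norm (fst p - snd p))\<^sup>2) \<partial>?\<pi>)"
    unfolding W2_sq_def by (rule INF_lower) (rule distr_pair_in_couplings[OF assms])
  also have "\<dots> = (\<integral>\<^sup>+ x. ennreal ((norm (X x - Y x))\<^sup>2) \<partial>M)"
    by (subst nn_integral_distr) simp_all
  finally show ?thesis .
qed

lemma W2_le_sqrt:
  assumes "W2_sq \<mu> \<nu> \<le> ennreal c" "0 \<le> c"
  shows "W2 \<mu> \<nu> \<le> ereal (sqrt c)"
proof -
  have "W2_sq \<mu> \<nu> \<noteq> \<top>" using assms(1) by (auto simp: top_unique)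
  moreover have "enn2real (W2_sq \<mu> \<nu>) \<le> c" using assms by (intro enn2real_leI)
  ultimately show ?thesis by (simp add: W2_def)
qed

text \<open>At \<open>t = 0\<close> the division by zero makes this \<open>2 \<alpha>\<^sup>2\<close>, which still dominates the right limit 0.\<close>
definition radial_cost_bound :: "real \<Rightarrow> real \<Rightarrow> real" where
  "radial_cost_bound \<alpha> t = 2 * (\<alpha> + t)\<^sup>2 * exp (- (\<alpha>\<^sup>2) / t\<^sup>2)"

lemma le_radial_cost_bound_of_gt:
  fixes c :: ennreal
  assumes "0 < \<alpha>" "0 \<le> s" and bound: "\<And>t. s < t \<Longrightarrow> c \<le> ennreal (radial_cost_bound \<alpha> t)"
  shows "c \<le> ennreal (radial_cost_bound \<alpha> s)"
proof -
  obtain L where lim: "(radial_cost_bound \<alpha> \<longlongrightarrow> L) (at_right s)"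
    and L: "L \<le> radial_cost_bound \<alpha> s"
  proof (cases "s = 0")
    case True
    have "(radial_cost_bound \<alpha> \<longlongrightarrow> 0) (at_right 0)"
      unfolding radial_cost_bound_def using \<open>0 < \<alpha>\<close> by real_asymp
    then show ?thesis using True that by (simp add: radial_cost_bound_def)
  next
    case False
    with \<open>0 \<le> s\<close> have "isCont (radial_cost_bound \<alpha>) s"
      unfolding radial_cost_bound_def by (intro continuous_intros) auto
    then show ?thesis
      using that unfolding isCont_def by (metis at_le order_refl subset_UNIV tendsto_mono)
  qed
  have "c \<le> ennreal L"
  proof (rule tendsto_lowerbound)
    show "((\<lambda>t. ennreal (radial_cost_bound \<alpha> t)) \<longlongrightarrow> ennreal L) (at_right s)"
      using lim by (rule tendsto_ennrealI)
    show "\<forall>\<^sub>F t in at_right s. c \<le> ennreal (radial_cost_bound \<alpha> t)"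
      using eventually_at_right_less by (rule eventually_mono) (rule bound)
  qed simp
  also have "\<dots> \<le> ennreal (radial_cost_bound \<alpha> s)" using L by (rule ennreal_leI)
  finally show ?thesis .
qed

lemma sqrt_radial_cost_bound:
  assumes "0 \<le> \<alpha> + t"
  shows "sqrt (radial_cost_bound \<alpha> t) = sqrt 2 * (\<alpha> + t) * exp (- (\<alpha>\<^sup>2) / (2 * t\<^sup>2))"
proof -
  have "exp (- (\<alpha>\<^sup>2) / t\<^sup>2) = (exp (- (\<alpha>\<^sup>2) / (2 * t\<^sup>2)))\<^sup>2"
    by (simp add: power2_eq_square flip: exp_add)
  then show ?thesis
    using assms by (simp add: radial_cost_bound_def real_sqrt_mult)
qed

lemma nn_integral_radial_resample_le:
  fixes Z :: "'a \<Rightarrow> 'b::real_normed_vector"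
  assumes subgauss: "sub_gaussian M (\<lambda>x. norm (Z x)) s" and [measurable]: "Z \<in> borel_measurable M"
    and "0 < \<alpha>" and V: "AE x in M. V x \<in> {0..\<alpha>}"
  shows "(\<integral>\<^sup>+ x. ennreal ((norm (Z x - (if norm (Z x) \<le> \<alpha> then Z x else (V x / norm (Z x)) *\<^sub>R Z x)))\<^sup>2) \<partial>M)
           \<le> ennreal (radial_cost_bound \<alpha> s)"
proof (rule le_radial_cost_bound_of_gt[OF \<open>0 < \<alpha>\<close> sub_gaussian_nonneg[OF subgauss]])
  fix t assume "s < t"
  with subgauss have t: "t \<in> subgauss_set M (\<lambda>x. norm (Z x))"
    by (rule sub_gaussian_mem_subgauss_set)
  have "AE x in M. (norm (Z x - (if norm (Z x) \<le> \<alpha> then Z x else (V x / norm (Z x)) *\<^sub>R Z x)))\<^sup>2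
          \<le> (\<alpha> + t)\<^sup>2 * exp (- (\<alpha>\<^sup>2) / t\<^sup>2) * exp ((norm (Z x))\<^sup>2 / t\<^sup>2)"
    using V by eventually_elim (rule norm_sub_radial_resample_sq_le, auto intro: subgauss_set_pos[OF t])
  from nn_integral_le_subgauss_set[OF t _ _ this]
  show "(\<integral>\<^sup>+ x. ennreal ((norm (Z x - (if norm (Z x) \<le> \<alpha> then Z x else (V x / norm (Z x)) *\<^sub>R Z x)))\<^sup>2) \<partial>M)
           \<le> ennreal (radial_cost_bound \<alpha> t)"
    by (simp add: radial_cost_bound_def mult.assoc)
qed

theorem lemma19:
  fixes M :: "'a measure"
    and Z :: "'a \<Rightarrow> real ^ 'd"
    and V :: "'a \<Rightarrow> real"
    and f :: "real ^ 'd \<Rightarrow> real"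
    and \<sigma>Z \<alpha> :: real
  assumes "prob_space M"
    and "distributed M lborel Z f"
    and "sub_gaussian M (\<lambda>x. norm (Z x)) (sqrt (real CARD('d)) * \<sigma>Z)"
    and "0 < \<alpha>" and "ereal \<alpha> < alpha_bar M Z"
    and "V \<in> borel_measurable M"
    and "distr M borel V = uniform_measure lborel {0..\<alpha>}"
    and "distr M (borel \<Otimes>\<^sub>M borel) (\<lambda>x. (Z x, V x)) = distr M borel Z \<Otimes>\<^sub>M distr M borel V"
  shows "W2 (distr M borel Z)
            (distr M borel (\<lambda>x. if norm (Z x) \<le> \<alpha> then Z x else (V x / norm (Z x)) *\<^sub>R Z x))
         \<le> ereal (sqrt 2 * (\<alpha> + sqrt (real CARD('d)) * \<sigma>Z)
                  * exp (- (\<alpha>\<^sup>2) / (2 * real CARD('d) * \<sigma>Z\<^sup>2)))"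
proof -
  let ?U = "\<lambda>x. if norm (Z x) \<le> \<alpha> then Z x else (V x / norm (Z x)) *\<^sub>R Z x"
  define s where "s = sqrt (real CARD('d)) * \<sigma>Z"
  have subgauss: "sub_gaussian M (\<lambda>x. norm (Z x)) s" using assms(3) by (simp add: s_def)
  have [measurable]: "Z \<in> borel_measurable M"
    using distributed_measurable[OF assms(2)] by (simp add: measurable_cong_sets[OF refl sets_lborel])
  note [measurable] = assms(6)
  have V: "AE x in M. V x \<in> {0..\<alpha>}"
    using assms(6) by (rule AE_distrD) (unfold assms(7), rule AE_uniform_measureI, auto)
  have "W2_sq (distr M borel Z) (distr M borel ?U) \<le> (\<integral>\<^sup>+ x. ennreal ((norm (Z x - ?U x))\<^sup>2) \<partial>M)"
    using assms(1) by (rule W2_sq_le_nn_integral) simp_all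
  also have "\<dots> \<le> ennreal (radial_cost_bound \<alpha> s)"
    by (rule nn_integral_radial_resample_le[OF subgauss _ assms(4) V]) simp
  finally have "W2 (distr M borel Z) (distr M borel ?U) \<le> ereal (sqrt (radial_cost_bound \<alpha> s))"
    by (rule W2_le_sqrt) (simp add: radial_cost_bound_def)
  also have "sqrt (radial_cost_bound \<alpha> s) = sqrt 2 * (\<alpha> + s) * exp (- (\<alpha>\<^sup>2) / (2 * s\<^sup>2))"
    using assms(4) sub_gaussian_nonneg[OF subgauss] by (intro sqrt_radial_cost_bound) simp
  finally show ?thesis
    by (simp add: s_def power_mult_distrib mult.assoc)
qed

end
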